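(* Let $r\ge0$ and let $A$ be an $E_{r+1}$-cofibrant dga. Then: (1) for all $n\ge0$ and $p\in\mathbb{Z}$, $(\mathrm{Dec}W)_pA^n=W_{p-n}A^n$; (2) the filtered dga $(A,\mathrm{Dec}W)$ is $E_r$-cofibrant.
   Context: Filtered dga's: a filtered dga over a field $\mathbf{k}$ of characteristic $0$ is a non-negatively graded commutative dga $A$ (differential of degree $+1$) with an increasing multiplicative regular exhaustive filtration $W$ by subcomplexes, with filtered unit ($\mathbf{k}$ trivially filtered). Deligne's décalage: $(\mathrm{Dec}W)_pA^n=\{x\in W_{p-n}A^n: dx\in W_{p-n-1}A^{n+1}\}$. $E_r$-cofibrant dga's: given a filtered dga $A$, an $E_r$-cofibrant extension of degree $n$ and weight $p$ is $A\otimes_\xi\Lambda V$ where $V$ is a vector space concentrated in degree $n$ and pure weight $p$ ($W_{p-1}V=0$, $W_pV=V$) and $\xi:V\to W_{p-r}A^{n+1}$ is linear with $d\circ\xi=0$; differential $dv=\xi(v)$ and filtration extended multiplicatively. An $E_r$-cofibrant dga is the colimit of a sequence of $E_r$-cofibrant extensions starting from $\mathbf{k}$. *)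

theory Defs
  imports Complex_Main "HOL-Library.Multiset"
begin

text \<open>A non-negatively graded commutative dga A = (A^n)_{n>=0} over the field 'k is encoded
  inside an ambient 'k-vector space 'a: gr n is the subspace A^n (distinct degrees meet only
  in 0, so the family is a graded vector space; the total algebra is the external direct sum).
  mul, unit, dif are the product, unit and differential (degree +1); filt p n is W_p A^n.\<close>

record ('k, 'a) fdga =
  sc   :: "'k \<Rightarrow> 'a \<Rightarrow> 'a"
  gr   :: "nat \<Rightarrow> 'a set"
  mul  :: "'a \<Rightarrow> 'a \<Rightarrow> 'a"
  unit :: 'a
  dif  :: "'a \<Rightarrow> 'a"
  filt :: "int \<Rightarrow> nat \<Rightarrow> 'a set"

definition sgn_mul :: "nat \<Rightarrow> 'a::ab_group_add \<Rightarrow> 'a" where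
  "sgn_mul k x = (if even k then x else - x)"

definition is_fdga :: "('k::field, 'a::ab_group_add) fdga \<Rightarrow> bool" where
  "is_fdga A \<longleftrightarrow>
     vector_space (sc A) \<and>
     (\<forall>n. module.subspace (sc A) (gr A n)) \<and>
     (\<forall>m n. m \<noteq> n \<longrightarrow> gr A m \<inter> gr A n = {0}) \<and>
     \<comment> \<open>product: graded, bilinear, associative, graded commutative, unital\<close>
     (\<forall>m n. \<forall>x\<in>gr A m. \<forall>y\<in>gr A n. mul A x y \<in> gr A (m + n)) \<and>
     (\<forall>m n. \<forall>x\<in>gr A m. \<forall>x'\<in>gr A m. \<forall>y\<in>gr A n.
        mul A (x + x') y = mul A x y + mul A x' y \<and> mul A y (x + x') = mul A y x + mul A y x') \<and>
     (\<forall>m n c. \<forall>x\<in>gr A m. \<forall>y\<in>gr A n.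
        mul A (sc A c x) y = sc A c (mul A x y) \<and> mul A x (sc A c y) = sc A c (mul A x y)) \<and>
     (\<forall>l m n. \<forall>x\<in>gr A l. \<forall>y\<in>gr A m. \<forall>z\<in>gr A n. mul A (mul A x y) z = mul A x (mul A y z)) \<and>
     (\<forall>m n. \<forall>x\<in>gr A m. \<forall>y\<in>gr A n. mul A x y = sgn_mul (m * n) (mul A y x)) \<and>
     unit A \<in> gr A 0 \<and>
     (\<forall>n. \<forall>x\<in>gr A n. mul A (unit A) x = x \<and> mul A x (unit A) = x) \<and>
     \<comment> \<open>differential: degree +1, linear, square zero, graded Leibniz rule\<close>
     (\<forall>n. \<forall>x\<in>gr A n. dif A x \<in> gr A (Suc n)) \<and>
     (\<forall>n c. \<forall>x\<in>gr A n. \<forall>y\<in>gr A n.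
        dif A (x + y) = dif A x + dif A y \<and> dif A (sc A c x) = sc A c (dif A x)) \<and>
     (\<forall>n. \<forall>x\<in>gr A n. dif A (dif A x) = 0) \<and>
     (\<forall>m n. \<forall>x\<in>gr A m. \<forall>y\<in>gr A n.
        dif A (mul A x y) = mul A (dif A x) y + sgn_mul m (mul A x (dif A y))) \<and>
     \<comment> \<open>filtration: increasing, by subcomplexes, multiplicative, regular, exhaustive, filtered unit\<close>
     (\<forall>p n. module.subspace (sc A) (filt A p n) \<and> filt A p n \<subseteq> gr A n) \<and>
     (\<forall>p n. filt A p n \<subseteq> filt A (p + 1) n) \<and>
     (\<forall>p n. \<forall>x\<in>filt A p n. dif A x \<in> filt A p (Suc n)) \<and>
     (\<forall>p q m n. \<forall>x\<in>filt A p m. \<forall>y\<in>filt A q n. mul A x y \<in> filt A (p + q) (m + n)) \<and>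
     (\<forall>n. \<exists>q. filt A q n = {0}) \<and>
     (\<forall>n. (\<Union>p. filt A p n) = gr A n) \<and>
     unit A \<in> filt A 0 0"

definition Dec :: "('k, 'a) fdga \<Rightarrow> int \<Rightarrow> nat \<Rightarrow> 'a set" where
  "Dec A p n = {x \<in> filt A (p - int n) n. dif A x \<in> filt A (p - int n - 1) (Suc n)}"

definition dec_fdga :: "('k, 'a) fdga \<Rightarrow> ('k, 'a) fdga" where
  "dec_fdga A = A\<lparr>filt := Dec A\<rparr>"

text \<open>Monomials in a basis X of a space V concentrated in degree n: multisets over X,
  required to be sets when n is odd (free graded-commutative algebra: polynomial algebra for
  n even, exterior algebra for n odd).  The monomial element is the product of the factors in
  some order; the order only affects the sign, which is irrelevant where it is used below.\<close>

definition monoms :: "'a set \<Rightarrow> nat \<Rightarrow> 'a multiset set" where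
  "monoms X n = {M. set_mset M \<subseteq> X \<and> (odd n \<longrightarrow> (\<forall>x. count M x \<le> 1))}"

definition mprod :: "('k, 'a) fdga \<Rightarrow> 'a multiset \<Rightarrow> 'a" where
  "mprod A M = foldr (mul A) (SOME xs. mset xs = M) (unit A)"

definition coef_ok ::
  "'a set \<Rightarrow> nat \<Rightarrow> nat \<Rightarrow> (nat \<Rightarrow> nat \<Rightarrow> 'a set) \<Rightarrow> ('a multiset \<Rightarrow> 'a::zero) \<Rightarrow> bool" where
  "coef_ok X n m C a \<longleftrightarrow> finite {M. a M \<noteq> 0} \<and>
     (\<forall>M. a M \<noteq> 0 \<longrightarrow> M \<in> monoms X n \<and> size M * n \<le> m \<and> a M \<in> C (size M) (m - size M * n))"

definition comb :: "('k, 'a::ab_group_add) fdga \<Rightarrow> ('a multiset \<Rightarrow> 'a) \<Rightarrow> 'a" where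
  "comb A a = (\<Sum>M\<in>{M. a M \<noteq> 0}. mul A (a M) (mprod A M))"

text \<open>Inside A, the sub-graded-space B' (degreewise) is the E_r-cofibrant extension
  B \<otimes>_xi \<Lambda>V of the sub-dga B by V concentrated in degree n and of pure weight p, with
  xi = d restricted to V, and with the filtration induced by W on B' equal to the
  multiplicative extension of the filtration induced on B:
  W_q (B \<otimes> \<Lambda>V) = sum over k of W_(q-kp) B \<otimes> \<Lambda>^k V.\<close>

definition is_ext ::
  "nat \<Rightarrow> ('k::field, 'a::ab_group_add) fdga \<Rightarrow> (nat \<Rightarrow> 'a set) \<Rightarrow> (nat \<Rightarrow> 'a set) \<Rightarrow> bool" where
  "is_ext r A B B' \<longleftrightarrow>
     (\<exists>n p V X.
        module.subspace (sc A) V \<and> V \<subseteq> gr A n \<and>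
        X \<subseteq> V \<and> \<not> module.dependent (sc A) X \<and> module.span (sc A) X = V \<and>
        (\<forall>v\<in>V. dif A v \<in> filt A (p - int r) (Suc n) \<inter> B (Suc n)) \<and>
        \<comment> \<open>B' is freely generated by V over B\<close>
        (\<forall>m. B' m = {comb A a | a. coef_ok X n m (\<lambda>k d. B d) a}) \<and>
        (\<forall>m a. coef_ok X n m (\<lambda>k d. B d) a \<and> comb A a = 0 \<longrightarrow> (\<forall>M. a M = 0)) \<and>
        \<comment> \<open>multiplicatively extended filtration, V of pure weight p\<close>
        (\<forall>q m. filt A q m \<inter> B' m =
           {comb A a | a. coef_ok X n m (\<lambda>k d. filt A (q - int k * p) d \<inter> B d) a}))"

text \<open>A is E_r-cofibrant: a filtered dga which is (isomorphic to) the colimit of a sequence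
  k = A_0 \<subseteq> A_1 \<subseteq> ... of E_r-cofibrant extensions; internally: an increasing exhausting
  sequence of sub-graded-spaces B i, starting with the trivially filtered ground field,
  each an E_r-cofibrant extension of the previous one.\<close>

definition E_cofibrant :: "nat \<Rightarrow> ('k::field, 'a::ab_group_add) fdga \<Rightarrow> bool" where
  "E_cofibrant r A \<longleftrightarrow> is_fdga A \<and>
     (\<exists>B :: nat \<Rightarrow> nat \<Rightarrow> 'a set.
        unit A \<noteq> 0 \<and>
        B 0 0 = range (\<lambda>c. sc A c (unit A)) \<and> (\<forall>m. m \<noteq> 0 \<longrightarrow> B 0 m = {0}) \<and>
        (\<forall>q m. filt A q m \<inter> B 0 m = (if q \<ge> 0 then B 0 m else {0})) \<and>
        (\<forall>i m. B i m \<subseteq> B (Suc i) m \<and> B i m \<subseteq> gr A m) \<and>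
        (\<forall>m. (\<Union>i. B i m) = gr A m) \<and>
        (\<forall>i. is_ext r A (B i) (B (Suc i))))"

end

theory Submission
  imports Defs
begin

(* In an E_{r+1}-cofibrant dga with r >= 0 the differential strictly lowers
   the weight: d(W_q A^m) is contained in W_{q-1} A^(m+1).  This is proved by induction along
   the sequence of extensions B_0 = k, B_1, B_2, ... exhausting A: on the ground field d
   vanishes; a generator v of weight p has dv of weight p - (r+1) <= p - 1; hence, by the
   Leibniz rule, every monomial in the generators and then every element b * v_1 ... v_k of
   the next stage with b in the previous stage again has its differential one weight lower.
   Once d lowers weights, the condition dx in W_{p-n-1} in the definition of Dec W is
   automatic, so (Dec W)_p A^n = W_{p-n} A^n, which is part (1).  For part (2) the same
   extensions serve for (A, Dec W): a generator of degree n and weight p has Dec-weight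
   p + n, and its differential lies in W_{p-r-1} A^(n+1) = (Dec W)_{(p+n)-r} A^(n+1), so
   each E_{r+1}-extension for W is an E_r-extension for Dec W. *)

lemma fdga_axioms:
  assumes "is_fdga A"
  shows fdga_vector_space: "vector_space (sc A)"
    and gr_subspace [rule_format]: "\<forall>n. module.subspace (sc A) (gr A n)"
    and unit_gr: "unit A \<in> gr A 0"
    and unit_mul [rule_format]:
      "\<forall>n. \<forall>x\<in>gr A n. mul A (unit A) x = x \<and> mul A x (unit A) = x"
    and gr_dif [rule_format]: "\<forall>n. \<forall>x\<in>gr A n. dif A x \<in> gr A (Suc n)"
    and dif_linear [rule_format]: "\<forall>n c. \<forall>x\<in>gr A n. \<forall>y\<in>gr A n.
        dif A (x + y) = dif A x + dif A y \<and> dif A (sc A c x) = sc A c (dif A x)"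
    and leibniz [rule_format]: "\<forall>m n. \<forall>x\<in>gr A m. \<forall>y\<in>gr A n.
        dif A (mul A x y) = mul A (dif A x) y + sgn_mul m (mul A x (dif A y))"
    and filt_subspace_gr [rule_format]:
      "\<forall>p n. module.subspace (sc A) (filt A p n) \<and> filt A p n \<subseteq> gr A n"
    and filt_step [rule_format]: "\<forall>p n. filt A p n \<subseteq> filt A (p + 1) n"
    and filt_mul [rule_format]:
      "\<forall>p q m n. \<forall>x\<in>filt A p m. \<forall>y\<in>filt A q n. mul A x y \<in> filt A (p + q) (m + n)"
    and filt_regular [rule_format]: "\<forall>n. \<exists>q. filt A q n = {0}"
    and filt_exhaustive [rule_format]: "\<forall>n. (\<Union>p. filt A p n) = gr A n"
    and unit_filt: "unit A \<in> filt A 0 0"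
  by (insert assms[unfolded is_fdga_def]) (elim conjE, assumption)+

lemma fdga_module: "is_fdga A \<Longrightarrow> module (sc A)"
  using fdga_vector_space module_iff_vector_space by blast

lemma filt_gr: "is_fdga A \<Longrightarrow> filt A p n \<subseteq> gr A n"
  using filt_subspace_gr by blast

lemma filt_subspace: "is_fdga A \<Longrightarrow> module.subspace (sc A) (filt A p n)"
  using filt_subspace_gr by blast

lemma filt_zero: "is_fdga A \<Longrightarrow> 0 \<in> filt A p n"
  using module.subspace_0[OF fdga_module filt_subspace] .

lemma filt_add: "is_fdga A \<Longrightarrow> x \<in> filt A p n \<Longrightarrow> y \<in> filt A p n \<Longrightarrow> x + y \<in> filt A p n"
  using module.subspace_add[OF fdga_module filt_subspace] by blast

lemma filt_sgn_mul:
  assumes F: "is_fdga A" and "x \<in> filt A p n"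
  shows "sgn_mul k x \<in> filt A p n"
  using module.subspace_neg[OF fdga_module[OF F] filt_subspace[OF F]] assms(2)
  by (simp add: sgn_mul_def)

lemma filt_sum:
  "is_fdga A \<Longrightarrow> (\<And>x. x \<in> S \<Longrightarrow> f x \<in> filt A p n) \<Longrightarrow> sum f S \<in> filt A p n"
  using module.subspace_sum[OF fdga_module filt_subspace] by blast

lemma filt_mono:
  assumes F: "is_fdga A" and "p \<le> q"
  shows "filt A p n \<subseteq> filt A q n"
proof -
  obtain k where q: "q = p + int k" using \<open>p \<le> q\<close> zle_iff_zadd by blast
  have "filt A p n \<subseteq> filt A (p + int k) n"
  proof (induction k)
    case (Suc k)
    then show ?case using filt_step[OF F, of "p + int k" n] by (simp add: algebra_simps)
  qed simp
  then show ?thesis using q by simp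
qed

lemma dif_zero:
  assumes F: "is_fdga A" shows "dif A 0 = 0"
proof -
  have "0 \<in> gr A 0" using module.subspace_0[OF fdga_module[OF F] gr_subspace[OF F]] .
  then have "dif A (0 + 0) = dif A 0 + dif A 0" using dif_linear[OF F] by blast
  then show ?thesis by simp
qed

text \<open>The unit is a cycle: d(1) = d(1 * 1) = 2 d(1) by the Leibniz rule.\<close>

lemma dif_unit:
  assumes F: "is_fdga A" shows "dif A (unit A) = 0"
proof -
  have u: "unit A \<in> gr A 0" and du: "dif A (unit A) \<in> gr A (Suc 0)"
    using unit_gr[OF F] gr_dif[OF F] by blast+
  have "dif A (unit A) = dif A (mul A (unit A) (unit A))" using unit_mul[OF F u] by simp
  also have "\<dots> = dif A (unit A) + dif A (unit A)"
    using leibniz[OF F u u] unit_mul[OF F du] by (simp add: sgn_mul_def)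
  finally show ?thesis by simp
qed

lemma dif_sum:
  assumes F: "is_fdga A" and "finite S" and "\<And>x. x \<in> S \<Longrightarrow> f x \<in> gr A n"
  shows "dif A (sum f S) = (\<Sum>x\<in>S. dif A (f x))"
  using assms(2,3)
proof (induction S rule: finite_induct)
  case empty then show ?case using dif_zero[OF F] by simp
next
  case (insert x S)
  have "f x \<in> gr A n" and "sum f S \<in> gr A n"
    using module.subspace_sum[OF fdga_module[OF F] gr_subspace[OF F], of S f] insert.prems by auto
  then have "dif A (f x + sum f S) = dif A (f x) + dif A (sum f S)"
    using dif_linear[OF F] by blast
  then show ?case using insert by simp
qed

section \<open>Elements whose differential has lower weight\<close>

definition lowers_weight_on :: "('k, 'a) fdga \<Rightarrow> (nat \<Rightarrow> 'a set) \<Rightarrow> bool" where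
  "lowers_weight_on A S \<longleftrightarrow>
     (\<forall>q m. \<forall>x \<in> filt A q m \<inter> S m. dif A x \<in> filt A (q - 1) (Suc m))"

lemma mul_lowers_weight:
  assumes F: "is_fdga A"
    and x: "x \<in> filt A p m" "dif A x \<in> filt A (p - 1) (Suc m)"
    and y: "y \<in> filt A q n" "dif A y \<in> filt A (q - 1) (Suc n)"
  shows "mul A x y \<in> filt A (p + q) (m + n) \<and>
         dif A (mul A x y) \<in> filt A (p + q - 1) (Suc (m + n))"
proof
  show "mul A x y \<in> filt A (p + q) (m + n)" using filt_mul[OF F x(1) y(1)] .
  have "mul A (dif A x) y \<in> filt A (p + q - 1) (Suc (m + n))"
    using filt_mul[OF F x(2) y(1)] by (simp add: algebra_simps)
  moreover have "mul A x (dif A y) \<in> filt A (p + q - 1) (Suc (m + n))"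
    using filt_mul[OF F x(1) y(2)] by (simp add: algebra_simps)
  moreover have "dif A (mul A x y) = mul A (dif A x) y + sgn_mul m (mul A x (dif A y))"
    using leibniz[OF F] x(1) y(1) filt_gr[OF F] by blast
  ultimately show "dif A (mul A x y) \<in> filt A (p + q - 1) (Suc (m + n))"
    using filt_add[OF F] filt_sgn_mul[OF F] by simp
qed

lemma mprod_lowers_weight:
  assumes F: "is_fdga A"
    and gens: "\<And>v. v \<in> set_mset M \<Longrightarrow> v \<in> filt A p n \<and> dif A v \<in> filt A (p - 1) (Suc n)"
  shows "mprod A M \<in> filt A (int (size M) * p) (size M * n) \<and>
         dif A (mprod A M) \<in> filt A (int (size M) * p - 1) (Suc (size M * n))"
proof -
  define xs where "xs = (SOME xs. mset xs = M)"
  have "mset xs = M" unfolding xs_def using someI_ex[OF ex_mset] .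
  then have len: "length xs = size M" and "set xs = set_mset M" by auto
  then have "\<forall>v \<in> set xs. v \<in> filt A p n \<and> dif A v \<in> filt A (p - 1) (Suc n)" using gens by blast
  then have "foldr (mul A) xs (unit A) \<in> filt A (int (length xs) * p) (length xs * n) \<and>
       dif A (foldr (mul A) xs (unit A)) \<in> filt A (int (length xs) * p - 1) (Suc (length xs * n))"
  proof (induction xs)
    case Nil
    then show ?case using unit_filt[OF F] dif_unit[OF F] filt_zero[OF F] by simp
  next
    case (Cons v xs)
    then show ?case
      using mul_lowers_weight[OF F, of v p n _ "int (length xs) * p" "length xs * n"]
      by (simp add: algebra_simps)
  qed
  then show ?thesis unfolding mprod_def xs_def[symmetric] len .
qed

lemma comb_lowers_weight:
  assumes F: "is_fdga A"
    and gens: "\<forall>v \<in> X. v \<in> filt A p n \<and> dif A v \<in> filt A (p - 1) (Suc n)"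
    and low: "lowers_weight_on A B"
    and co: "coef_ok X n m (\<lambda>k d. filt A (q - int k * p) d \<inter> B d) a"
  shows "dif A (comb A a) \<in> filt A (q - 1) (Suc m)"
proof -
  let ?S = "{M. a M \<noteq> 0}"
  have summand: "mul A (a M) (mprod A M) \<in> filt A q m \<and>
              dif A (mul A (a M) (mprod A M)) \<in> filt A (q - 1) (Suc m)" if "M \<in> ?S" for M
  proof -
    define k d where "k = size M" and "d = m - size M * n"
    have "M \<in> monoms X n \<and> k * n \<le> m \<and> a M \<in> filt A (q - int k * p) d \<inter> B d"
      using co that unfolding coef_ok_def k_def d_def by blast
    then have M: "set_mset M \<subseteq> X" "k * n \<le> m" "a M \<in> filt A (q - int k * p) d" "a M \<in> B d"
      unfolding monoms_def by auto
    have "dif A (a M) \<in> filt A (q - int k * p - 1) (Suc d)"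
      using low M(3,4) unfolding lowers_weight_on_def by blast
    moreover have "mprod A M \<in> filt A (int k * p) (k * n) \<and>
                   dif A (mprod A M) \<in> filt A (int k * p - 1) (Suc (k * n))"
      using mprod_lowers_weight[OF F] gens M(1) unfolding k_def by blast
    ultimately have "mul A (a M) (mprod A M) \<in> filt A (q - int k * p + int k * p) (d + k * n) \<and>
        dif A (mul A (a M) (mprod A M)) \<in> filt A (q - int k * p + int k * p - 1) (Suc (d + k * n))"
      using mul_lowers_weight[OF F M(3)] by blast
    moreover have "d + k * n = m" using M(2) unfolding d_def k_def by simp
    ultimately show ?thesis by simp
  qed
  have fin: "finite ?S" using co unfolding coef_ok_def by blast
  have "dif A (comb A a) = (\<Sum>M\<in>?S. dif A (mul A (a M) (mprod A M)))"
    unfolding comb_def by (rule dif_sum[OF F fin, where n = m]) (use summand filt_gr[OF F] in blast)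
  also have "\<dots> \<in> filt A (q - 1) (Suc m)" by (rule filt_sum[OF F]) (use summand in blast)
  finally show ?thesis .
qed

section \<open>The differential of an E_{r+1}-cofibrant dga lowers weights\<close>

text \<open>A generator v of an extension of weight p lies in W_p: it is the combination 1 * v,
  whose coefficient 1 has weight 0.\<close>

lemma ext_generator_weight:
  assumes F: "is_fdga A" and u: "unit A \<noteq> 0" "unit A \<in> B 0"
    and filt_ext: "\<forall>q m. filt A q m \<inter> B' m =
           {comb A a | a. coef_ok X n m (\<lambda>k d. filt A (q - int k * p) d \<inter> B d) a}"
    and v: "v \<in> X" "v \<in> gr A n"
  shows "v \<in> filt A p n"
proof -
  define a where "a = (\<lambda>M. if M = {#v#} then unit A else 0)"
  have S: "{M. a M \<noteq> 0} = {{#v#}}" using u by (auto simp: a_def)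
  have "coef_ok X n n (\<lambda>k d. filt A (p - int k * p) d \<inter> B d) a"
    unfolding coef_ok_def S using v unit_filt[OF F] u by (auto simp: a_def monoms_def)
  moreover have "comb A a = v"
    unfolding comb_def mprod_def S using v unit_mul[OF F] by (simp add: a_def)
  ultimately have "v \<in> filt A p n \<inter> B' n" unfolding filt_ext[rule_format] by blast
  then show ?thesis by blast
qed

lemma ext_lowers_weight:
  assumes F: "is_fdga A" and u: "unit A \<noteq> 0" "unit A \<in> B 0"
    and ext: "is_ext (Suc r) A B B'" and low: "lowers_weight_on A B"
  shows "lowers_weight_on A B'"
proof -
  obtain n p V X where V: "V \<subseteq> gr A n" "X \<subseteq> V"
    and dV: "\<forall>v\<in>V. dif A v \<in> filt A (p - int (Suc r)) (Suc n) \<inter> B (Suc n)"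
    and filt_ext: "\<forall>q m. filt A q m \<inter> B' m =
           {comb A a | a. coef_ok X n m (\<lambda>k d. filt A (q - int k * p) d \<inter> B d) a}"
    using ext unfolding is_ext_def by (elim exE conjE) (rule that, assumption+)
  have gens: "\<forall>v \<in> X. v \<in> filt A p n \<and> dif A v \<in> filt A (p - 1) (Suc n)"
  proof
    fix v assume "v \<in> X"
    then have "v \<in> gr A n" and "dif A v \<in> filt A (p - int (Suc r)) (Suc n)" using V dV by auto
    moreover have "filt A (p - int (Suc r)) (Suc n) \<subseteq> filt A (p - 1) (Suc n)"
      by (rule filt_mono[OF F]) simp
    ultimately show "v \<in> filt A p n \<and> dif A v \<in> filt A (p - 1) (Suc n)"
      using ext_generator_weight[OF F u filt_ext \<open>v \<in> X\<close>] by blast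
  qed
  show ?thesis
    unfolding lowers_weight_on_def
  proof (intro allI ballI)
    fix q m x assume "x \<in> filt A q m \<inter> B' m"
    then obtain a where "x = comb A a" "coef_ok X n m (\<lambda>k d. filt A (q - int k * p) d \<inter> B d) a"
      unfolding filt_ext[rule_format] by blast
    then show "dif A x \<in> filt A (q - 1) (Suc m)" using comb_lowers_weight[OF F gens low] by blast
  qed
qed

lemma E_cofibrant_lowers_weight:
  assumes E: "E_cofibrant (Suc r) A" and x: "x \<in> filt A q m"
  shows "dif A x \<in> filt A (q - 1) (Suc m)"
proof -
  have F: "is_fdga A" using E unfolding E_cofibrant_def by blast
  obtain B where u: "unit A \<noteq> 0" and B00: "B 0 0 = range (\<lambda>c. sc A c (unit A))"
    and B0m: "\<forall>m. m \<noteq> 0 \<longrightarrow> B 0 m = {0}"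
    and Bmono: "\<forall>i m. B i m \<subseteq> B (Suc i) m \<and> B i m \<subseteq> gr A m"
    and Bex: "\<forall>m. (\<Union>i. B i m) = gr A m"
    and ext: "\<forall>i. is_ext (Suc r) A (B i) (B (Suc i))"
    using E unfolding E_cofibrant_def by (elim exE conjE) (rule that, assumption+)
  have unitB: "unit A \<in> B i 0" for i
  proof (induction i)
    case 0
    have "sc A 1 (unit A) = unit A" using module.scale_one[OF fdga_module[OF F]] .
    then show ?case unfolding B00 by (metis rangeI)
  next
    case (Suc i) then show ?case using Bmono by blast
  qed
  have "dif A y = 0" if y: "y \<in> B 0 k" for y k
  proof (cases "k = 0")
    case True
    then obtain c where "y = sc A c (unit A)" using y B00 by auto
    moreover have "dif A (sc A c (unit A)) = sc A c (dif A (unit A))"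
      using dif_linear[OF F unit_gr[OF F] unit_gr[OF F]] by blast
    ultimately show ?thesis
      using dif_unit[OF F] module.scale_zero_right[OF fdga_module[OF F]] by simp
  next
    case False
    then show ?thesis using y B0m dif_zero[OF F] by auto
  qed
  then have "lowers_weight_on A (B 0)"
    unfolding lowers_weight_on_def using filt_zero[OF F] by auto
  then have low: "lowers_weight_on A (B i)" for i
  proof (induction i)
    case (Suc i)
    then show ?case using ext_lowers_weight[OF F u, where B = "B i"] unitB ext by blast
  qed
  obtain i where "x \<in> B i m" using x filt_gr[OF F] Bex by blast
  then show ?thesis using x low unfolding lowers_weight_on_def by blast
qed

section \<open>Decalage when the differential lowers weights\<close>

lemma Dec_shift:
  assumes low: "\<And>x q m. x \<in> filt A q m \<Longrightarrow> dif A x \<in> filt A (q - 1) (Suc m)"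
  shows "Dec A p n = filt A (p - int n) n"
  unfolding Dec_def using low by auto

lemma dec_fdga_simps:
  "sc (dec_fdga A) = sc A" "gr (dec_fdga A) = gr A" "mul (dec_fdga A) = mul A"
  "unit (dec_fdga A) = unit A" "dif (dec_fdga A) = dif A" "filt (dec_fdga A) = Dec A"
  by (simp_all add: dec_fdga_def)

lemma dec_filt:
  assumes low: "\<And>x q m. x \<in> filt A q m \<Longrightarrow> dif A x \<in> filt A (q - 1) (Suc m)"
  shows "filt (dec_fdga A) = (\<lambda>p n. filt A (p - int n) n)"
  using Dec_shift[OF low] by (simp add: dec_fdga_simps fun_eq_iff)

text \<open>Every axiom on the shifted filtration follows from the same axiom for W; compatibility
  with d is where the lowering of weights is needed.\<close>

lemma dec_is_fdga:
  assumes F: "is_fdga A"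
    and low: "\<And>x q m. x \<in> filt A q m \<Longrightarrow> dif A x \<in> filt A (q - 1) (Suc m)"
  shows "is_fdga (dec_fdga A)"
proof -
  have filt_dec: "filt (dec_fdga A) = (\<lambda>p n. filt A (p - int n) n)"
    by (rule dec_filt) (erule low)
  have "\<forall>p n. module.subspace (sc A) (filt A (p - int n) n) \<and> filt A (p - int n) n \<subseteq> gr A n"
    using filt_subspace_gr[OF F] by blast
  moreover have "\<forall>p n. filt A (p - int n) n \<subseteq> filt A (p + 1 - int n) n"
    using filt_step[OF F] by (simp add: diff_add_eq[symmetric])
  moreover have "\<forall>p n. \<forall>x\<in>filt A (p - int n) n. dif A x \<in> filt A (p - int (Suc n)) (Suc n)"
  proof (intro allI ballI)
    fix p n x assume "x \<in> filt A (p - int n) n"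
    then have "dif A x \<in> filt A (p - int n - 1) (Suc n)" by (rule low)
    then show "dif A x \<in> filt A (p - int (Suc n)) (Suc n)" by (simp add: algebra_simps)
  qed
  moreover have "\<forall>p q m n. \<forall>x\<in>filt A (p - int m) m. \<forall>y\<in>filt A (q - int n) n.
      mul A x y \<in> filt A (p + q - int (m + n)) (m + n)"
  proof (intro allI ballI)
    fix p q m n x y assume "x \<in> filt A (p - int m) m" "y \<in> filt A (q - int n) n"
    then have "mul A x y \<in> filt A (p - int m + (q - int n)) (m + n)" by (rule filt_mul[OF F])
    then show "mul A x y \<in> filt A (p + q - int (m + n)) (m + n)" by (simp add: algebra_simps)
  qed
  moreover have "\<forall>n. \<exists>q. filt A (q - int n) n = {0}"
  proof
    fix n obtain q where "filt A q n = {0}" using filt_regular[OF F] by blast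
    then show "\<exists>q. filt A (q - int n) n = {0}" by (intro exI[of _ "q + int n"]) simp
  qed
  moreover have "\<forall>n. (\<Union>p. filt A (p - int n) n) = gr A n"
  proof
    fix n
    have "(\<lambda>p. filt A p n) ` range (\<lambda>p. p - int n) = range (\<lambda>p. filt A (p - int n) n)"
      by (rule image_image)
    then have "(\<Union>p. filt A (p - int n) n) = (\<Union>p. filt A p n)" by (metis surj_diff_right)
    then show "(\<Union>p. filt A (p - int n) n) = gr A n" using filt_exhaustive[OF F] by simp
  qed
  moreover have "unit A \<in> filt A (0 - int 0) 0" using unit_filt[OF F] by simp
  ultimately show ?thesis
    using F[unfolded is_fdga_def] unfolding is_fdga_def filt_dec dec_fdga_simps(1-5)
    by (elim conjE) (intro conjI; assumption)
qed

lemma coef_ok_cong: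
  assumes "\<And>k. k * n \<le> m \<Longrightarrow> C k (m - k * n) = C' k (m - k * n)"
  shows "coef_ok X n m C a = coef_ok X n m C' a"
  unfolding coef_ok_def using assms by metis

text \<open>A generator of degree n and weight p for W has weight p + n for Dec W, and its
  differential, of W-weight p - (r+1), has Dec-weight (p + n) - r.\<close>

lemma dec_ext:
  assumes low: "\<And>x q m. x \<in> filt A q m \<Longrightarrow> dif A x \<in> filt A (q - 1) (Suc m)"
    and ext: "is_ext (Suc r) A B B'"
  shows "is_ext r (dec_fdga A) B B'"
proof -
  obtain n p V X where V: "module.subspace (sc A) V" "V \<subseteq> gr A n" "X \<subseteq> V"
      "\<not> module.dependent (sc A) X" "module.span (sc A) X = V"
    and dV: "\<forall>v\<in>V. dif A v \<in> filt A (p - int (Suc r)) (Suc n) \<inter> B (Suc n)"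
    and free: "\<forall>m. B' m = {comb A a | a. coef_ok X n m (\<lambda>k d. B d) a}"
      "\<forall>m a. coef_ok X n m (\<lambda>k d. B d) a \<and> comb A a = 0 \<longrightarrow> (\<forall>M. a M = 0)"
    and filt_ext: "\<forall>q m. filt A q m \<inter> B' m =
           {comb A a | a. coef_ok X n m (\<lambda>k d. filt A (q - int k * p) d \<inter> B d) a}"
    using ext unfolding is_ext_def by (elim exE conjE) (rule that, assumption+)
  have dV': "\<forall>v\<in>V. dif A v \<in> filt A (p + int n - int r - int (Suc n)) (Suc n) \<inter> B (Suc n)"
    using dV by (simp add: algebra_simps)
  have "coef_ok X n m (\<lambda>k d. filt A (q - int m - int k * p) d \<inter> B d) a =
        coef_ok X n m (\<lambda>k d. filt A (q - int k * (p + int n) - int d) d \<inter> B d) a" for q m a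
  proof (rule coef_ok_cong)
    fix k assume "k * n \<le> m"
    then have weight: "q - int m - int k * p = q - int k * (p + int n) - int (m - k * n)"
      by (simp add: of_nat_diff algebra_simps)
    show "filt A (q - int m - int k * p) (m - k * n) \<inter> B (m - k * n) =
        filt A (q - int k * (p + int n) - int (m - k * n)) (m - k * n) \<inter> B (m - k * n)"
      unfolding weight ..
  qed
  then have filt_ext': "\<forall>q m. filt A (q - int m) m \<inter> B' m =
      {comb A a | a. coef_ok X n m (\<lambda>k d. filt A (q - int k * (p + int n) - int d) d \<inter> B d) a}"
    using filt_ext by simp
  have filt_dec: "filt (dec_fdga A) = (\<lambda>p n. filt A (p - int n) n)"
    by (rule dec_filt) (erule low)
  have comb_dec: "comb (dec_fdga A) = comb A"
    by (simp add: comb_def mprod_def dec_fdga_simps fun_eq_iff)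
  show ?thesis
    unfolding is_ext_def filt_dec dec_fdga_simps(1-5) comb_dec
    by (rule exI[of _ n], rule exI[of _ "p + int n"], rule exI[of _ V], rule exI[of _ X], intro conjI)
      (fact V dV' free filt_ext')+
qed

section \<open>The decalage of an E_{r+1}-cofibrant dga\<close>

lemma E_cofibrant_dec:
  assumes E: "E_cofibrant (Suc r) A"
  shows "E_cofibrant r (dec_fdga A)"
proof -
  have F: "is_fdga A" using E unfolding E_cofibrant_def by blast
  have low: "\<And>x q m. x \<in> filt A q m \<Longrightarrow> dif A x \<in> filt A (q - 1) (Suc m)"
    by (rule E_cofibrant_lowers_weight[OF E])
  obtain B where base: "unit A \<noteq> 0" "B 0 0 = range (\<lambda>c. sc A c (unit A))"
      "\<forall>m. m \<noteq> 0 \<longrightarrow> B 0 m = {0}"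
    and B0_filt: "\<forall>q m. filt A q m \<inter> B 0 m = (if q \<ge> 0 then B 0 m else {0})"
    and seq: "\<forall>i m. B i m \<subseteq> B (Suc i) m \<and> B i m \<subseteq> gr A m" "\<forall>m. (\<Union>i. B i m) = gr A m"
    and ext: "\<forall>i. is_ext (Suc r) A (B i) (B (Suc i))"
    using E unfolding E_cofibrant_def by (elim exE conjE) (rule that, assumption+)
  text \<open>The ground field sits in degree 0, where Dec W and W agree.\<close>
  have B0_dec: "\<forall>q m. filt A (q - int m) m \<inter> B 0 m = (if q \<ge> 0 then B 0 m else {0})"
  proof (intro allI)
    fix q m show "filt A (q - int m) m \<inter> B 0 m = (if q \<ge> 0 then B 0 m else {0})"
      using B0_filt base(3) filt_zero[OF F] by (cases "m = 0") auto
  qed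
  have filt_dec: "filt (dec_fdga A) = (\<lambda>p n. filt A (p - int n) n)"
    by (rule dec_filt) (erule low)
  have dec_F: "is_fdga (dec_fdga A)" by (rule dec_is_fdga[OF F]) (erule low)
  have ext_dec: "\<forall>i. is_ext r (dec_fdga A) (B i) (B (Suc i))"
  proof
    fix i show "is_ext r (dec_fdga A) (B i) (B (Suc i))"
      by (rule dec_ext) (erule low, use ext in blast)
  qed
  show ?thesis
    unfolding E_cofibrant_def filt_dec dec_fdga_simps(1-5)
    by (intro conjI exI[of _ B]) (fact dec_F base B0_dec seq ext_dec)+
qed

theorem lemma2p6:
  fixes r :: nat and A :: "('k::field_char_0, 'a::ab_group_add) fdga"
  assumes "E_cofibrant (Suc r) A"
  shows "(\<forall>n p. Dec A p n = filt A (p - int n) n) \<and> E_cofibrant r (dec_fdga A)"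
proof -
  have "\<And>x q m. x \<in> filt A q m \<Longrightarrow> dif A x \<in> filt A (q - 1) (Suc m)"
    by (rule E_cofibrant_lowers_weight[OF assms])
  then show ?thesis using Dec_shift E_cofibrant_dec[OF assms] by blast
qed

end
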